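(* In the two-tier residency matching game described in the context, under the large market approximation, let $X\in[0,K]$ be the expected number of high hospitals listed by a high doctor under a symmetric strategy of the high doctors, and let $p(X,r)$ (resp. $p'(X,r)$) be the probability that a single application of a high doctor to a high (resp. low) hospital is accepted. Then $p(X,r)$ is strictly decreasing in $X$ for all $r>0$, and $p'(X,r)$ is strictly increasing in $X$.
   Context: Model: there are $n$ high-tier and $rn$ low-tier doctors ($r>0$), and $n$ high-tier and $rn$ low-tier hospitals, each with one position. Every hospital prefers every high doctor to every low doctor and every doctor prefers every high hospital to every low hospital; within a tier, preferences are independent uniformly random permutations. Each doctor submits a ranked list of exactly $K$ hospitals; hospitals submit full true rankings; doctor-proposing deferred acceptance is run. A doctor's pure strategy $(k,K-k)$ lists his $k$ most preferred high hospitals followed by his $K-k$ most preferred low hospitals; a symmetric strategy of high doctors in which a fraction $x$ play $(k+1,K-k-1)$ and $1-x$ play $(k,K-k)$ is summarized by $X=k+x$. Large market approximation: as $n\to\infty$ with $r,K$ fixed, each application of a high doctor to a high (low) hospital is accepted independently with probability $p$ ($p'$), these probabilities being determined by fixed-point equations stating that the expected number of matched doctors equals the expected number of hospitals receiving at least one application, where a hospital receiving on average $\lambda$ applications gets none with probability $e^{-\lambda}$ (e.g. if all high doctors list $k$ high hospitals, $(1-p)^k=e^{-(1-(1-p)^k)/p}$). *)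

theory Defs
  imports Complex_Main
begin

text \<open>Symmetric strategy X = k + x of the high doctors: a fraction x lists (k+1) high
  hospitals, a fraction 1-x lists k high hospitals (k = floor X, x = X - k).\<close>

definition strat_k :: "real \<Rightarrow> nat" where
  "strat_k X = nat \<lfloor>X\<rfloor>"

definition strat_x :: "real \<Rightarrow> real" where
  "strat_x X = X - real (strat_k X)"

text \<open>High tier, per high doctor (normalised by n): expected number matched to a high hospital,
  and expected number of applications sent to high hospitals, when each application is
  accepted independently with probability p.\<close>

definition high_matched :: "real \<Rightarrow> real \<Rightarrow> real" where
  "high_matched X p =
     strat_x X * (1 - (1 - p) ^ (strat_k X + 1)) + (1 - strat_x X) * (1 - (1 - p) ^ strat_k X)"

definition high_apps :: "real \<Rightarrow> real \<Rightarrow> real" where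
  "high_apps X p =
     strat_x X * (\<Sum>i<strat_k X + 1. (1 - p) ^ i) + (1 - strat_x X) * (\<Sum>i<strat_k X. (1 - p) ^ i)"

text \<open>Fixed-point equation: matched doctors = hospitals (n of them) receiving at least one
  application; mean applications per high hospital = high_apps.\<close>

definition high_fp :: "real \<Rightarrow> real \<Rightarrow> bool" where
  "high_fp X p \<longleftrightarrow> high_matched X p = 1 - exp (- high_apps X p)"

definition p_high :: "real \<Rightarrow> real" where
  "p_high X = (THE p. p \<in> {0<..1} \<and> high_fp X p)"

text \<open>Low tier: high doctors not matched in the high tier continue down their list of
  K-k (resp. K-k-1) low hospitals; each application accepted with probability p'.
  There are r n low hospitals, so mean applications per low hospital = low_apps / r.\<close>

definition low_matched :: "nat \<Rightarrow> real \<Rightarrow> real \<Rightarrow> real \<Rightarrow> real" where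
  "low_matched K X p p' =
     strat_x X * (1 - p) ^ (strat_k X + 1) * (1 - (1 - p') ^ (K - strat_k X - 1))
   + (1 - strat_x X) * (1 - p) ^ strat_k X * (1 - (1 - p') ^ (K - strat_k X))"

definition low_apps :: "nat \<Rightarrow> real \<Rightarrow> real \<Rightarrow> real \<Rightarrow> real" where
  "low_apps K X p p' =
     strat_x X * (1 - p) ^ (strat_k X + 1) * (\<Sum>i<K - strat_k X - 1. (1 - p') ^ i)
   + (1 - strat_x X) * (1 - p) ^ strat_k X * (\<Sum>i<K - strat_k X. (1 - p') ^ i)"

definition low_fp :: "real \<Rightarrow> nat \<Rightarrow> real \<Rightarrow> real \<Rightarrow> real \<Rightarrow> bool" where
  "low_fp r K X p p' \<longleftrightarrow> low_matched K X p p' = r * (1 - exp (- low_apps K X p p' / r))"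

definition p_low :: "real \<Rightarrow> nat \<Rightarrow> real \<Rightarrow> real" where
  "p_low r K X = (THE p'. p' \<in> {0<..1} \<and> low_fp r K X (p_high X) p')"

end

theory Submission
  imports Defs
begin

text \<open>In each tier let \<open>\<rho>\<close> be the residual, the fraction of its hospitals receiving no
  application.  The fixed-point equation reads \<open>\<rho> = exp (- (1 - \<rho>) / p)\<close>, i.e.
  \<open>p = (1 - \<rho>) / - ln \<rho>\<close>, a strictly increasing function of \<open>\<rho> \<in> (0, 1)\<close>.  Since the
  residual is nonincreasing in \<open>p\<close>, comparing the fixed points of two strategies reduces to
  comparing their residuals at a common \<open>p\<close>.  Listing more high hospitals lowers the high-tier
  residual, hence \<open>p\<close>; it also sends fewer high doctors, with no longer low lists, down to the
  low tier, which raises the low-tier residual, hence \<open>p'\<close>.\<close>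

section \<open>Residual fixed points\<close>

lemma add_one_less_exp:
  fixes y :: real
  assumes "y \<noteq> 0"
  shows "1 + y < exp y"
proof (cases "1 + y \<le> 0")
  case True
  then show ?thesis using exp_gt_zero[of y] by linarith
next
  case False
  have "1 + y < (1 + y / 2)\<^sup>2"
    using assms by (simp add: power2_eq_square field_simps) (metis not_real_square_gt_zero)
  also have "\<dots> \<le> exp (y / 2) ^ 2"
    using False by (intro power_mono) (auto simp: exp_ge_add_one_self[of "y / 2", simplified])
  also have "\<dots> = exp y" by (simp add: power2_eq_square flip: exp_add)
  finally show ?thesis .
qed

lemma one_minus_exp_neg_div_strict_antimono:
  fixes s t :: real
  assumes "0 < s" "s < t"
  shows "(1 - exp (- t)) / t < (1 - exp (- s)) / s"
proof -
  define g where "g u = (1 - exp (- u)) / u" for u :: real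
  have "g t < g s"
  proof (rule DERIV_neg_imp_decreasing[OF assms(2)])
    fix u assume "s \<le> u" "u \<le> t"
    then have u: "0 < u" using assms by linarith
    have "DERIV g u :> (exp (- u) * u - (1 - exp (- u))) / u\<^sup>2"
      unfolding g_def using u by (auto intro!: derivative_eq_intros simp: power2_eq_square field_simps)
    moreover have "exp (- u) * (1 + u) < exp (- u) * exp u"
      using add_one_less_exp[of u] u by simp
    then have "(exp (- u) * u - (1 - exp (- u))) / u\<^sup>2 < 0"
      using u by (simp add: divide_neg_pos algebra_simps flip: exp_add)
    ultimately show "\<exists>D. DERIV g u :> D \<and> D < 0" by blast
  qed
  then show ?thesis by (simp add: g_def)
qed

definition prob_of_residual :: "real \<Rightarrow> real" where
  "prob_of_residual R = (1 - R) / - ln R"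

lemma prob_of_residual_strict_mono:
  assumes "0 < a" "a < b" "b < 1"
  shows "prob_of_residual a < prob_of_residual b"
  using one_minus_exp_neg_div_strict_antimono[of "- ln b" "- ln a"] assms
  by (simp add: prob_of_residual_def)

definition residual_fixpoint :: "(real \<Rightarrow> real) \<Rightarrow> real \<Rightarrow> bool" where
  "residual_fixpoint \<rho> p \<longleftrightarrow> p \<in> {0<..1} \<and> \<rho> p = exp (- (1 - \<rho> p) / p)"

lemma residual_fixpoint_imp_prob_of_residual:
  assumes "residual_fixpoint \<rho> p" "\<rho> p < 1"
  shows "0 < \<rho> p" "p = prob_of_residual (\<rho> p)"
proof -
  have p: "0 < p" and fp: "\<rho> p = exp (- (1 - \<rho> p) / p)"
    using assms(1) by (auto simp: residual_fixpoint_def)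
  then show "0 < \<rho> p" by (metis exp_gt_zero)
  then have "ln (\<rho> p) = - (1 - \<rho> p) / p" using fp by (metis ln_exp)
  then show "p = prob_of_residual (\<rho> p)"
    using p assms(2) \<open>0 < \<rho> p\<close> by (auto simp: prob_of_residual_def field_simps)
qed

lemma residual_fixpoint_le:
  assumes antitone: "\<And>x y. 0 < x \<Longrightarrow> x \<le> y \<Longrightarrow> y \<le> 1 \<Longrightarrow> \<sigma> y \<le> \<sigma> x"
    and fp: "residual_fixpoint \<rho> p" "\<rho> p < 1"
    and fq: "residual_fixpoint \<sigma> q" "\<sigma> q < 1"
    and "\<sigma> p \<le> \<rho> p"
  shows "q \<le> p"
proof (rule ccontr)
  assume "\<not> q \<le> p"
  then have "\<sigma> q \<le> \<sigma> p"
    using antitone fp(1) fq(1) by (simp add: residual_fixpoint_def)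
  also have "\<dots> \<le> \<rho> p" by fact
  finally have "\<not> prob_of_residual (\<rho> p) < prob_of_residual (\<sigma> q)"
    using prob_of_residual_strict_mono residual_fixpoint_imp_prob_of_residual fp fq
    by (metis less_le_not_le order_le_less)
  then show False
    using \<open>\<not> q \<le> p\<close> residual_fixpoint_imp_prob_of_residual(2) fp fq by force
qed

lemma residual_fixpoint_less:
  assumes antitone: "\<And>x y. 0 < x \<Longrightarrow> x \<le> y \<Longrightarrow> y \<le> 1 \<Longrightarrow> \<sigma> y \<le> \<sigma> x"
    and fp: "residual_fixpoint \<rho> p" "\<rho> p < 1"
    and fq: "residual_fixpoint \<sigma> q" "\<sigma> q < 1"
    and "\<sigma> p < \<rho> p"
  shows "q < p"
proof (rule ccontr)
  assume "\<not> q < p"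
  then have "\<sigma> q \<le> \<sigma> p"
    using antitone fp(1) fq(1) by (simp add: residual_fixpoint_def)
  also have "\<dots> < \<rho> p" by fact
  finally have "prob_of_residual (\<sigma> q) < prob_of_residual (\<rho> p)"
    using prob_of_residual_strict_mono residual_fixpoint_imp_prob_of_residual(1) fp fq by blast
  then show False
    using \<open>\<not> q < p\<close> residual_fixpoint_imp_prob_of_residual(2) fp fq by force
qed

lemma exp_neg_div_less_one_minus:
  fixes w p c :: real
  assumes "0 < w" "w \<le> c * p" "0 < p" "p * (1 + c) < 1"
  shows "exp (- w / p) < 1 - w"
proof -
  have "exp (- w / p) \<le> 1 / (1 + w / p)"
    using exp_ge_add_one_self[of "w / p"] assms by (simp add: exp_minus field_simps)
  also have "\<dots> = p / (p + w)" using assms by (simp add: field_simps)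
  also have "\<dots> < 1 - w"
  proof -
    have "p + w < 1" using assms by (simp add: algebra_simps)
    then have "0 < w * (1 - p - w)" using assms by simp
    then show ?thesis using assms by (simp add: field_simps)
  qed
  finally show ?thesis .
qed

text \<open>Existence by the intermediate value theorem between \<open>p = 1\<close>, where \<open>\<rho> < exp (- (1 - \<rho>))\<close>,
  and a small \<open>p\<close>, where the linear bound on \<open>1 - \<rho>\<close> makes \<open>exp (- (1 - \<rho>) / p)\<close> tiny.\<close>

lemma residual_fixpoint_ex1:
  fixes \<rho> :: "real \<Rightarrow> real" and c :: real
  assumes cont: "continuous_on {0<..1} \<rho>"
    and antitone: "\<And>p q. 0 < p \<Longrightarrow> p \<le> q \<Longrightarrow> q \<le> 1 \<Longrightarrow> \<rho> q \<le> \<rho> p"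
    and less_one: "\<And>p. 0 < p \<Longrightarrow> p \<le> 1 \<Longrightarrow> \<rho> p < 1"
    and linear: "0 \<le> c" "\<And>p. 0 < p \<Longrightarrow> p \<le> 1 \<Longrightarrow> 1 - \<rho> p \<le> c * p"
  shows "\<exists>!p. residual_fixpoint \<rho> p"
proof (rule ex_ex1I)
  define W where "W p = \<rho> p - exp (- (1 - \<rho> p) / p)" for p
  define p0 where "p0 = 1 / (2 + c)"
  have p0: "0 < p0" "p0 \<le> 1" "p0 * (1 + c) < 1" using linear(1) by (auto simp: p0_def field_simps)
  have "continuous_on {p0..1} W"
    unfolding W_def using p0 by (intro continuous_intros continuous_on_subset[OF cont]) auto
  moreover have "W 1 \<le> 0"
    using add_one_less_exp[of "- (1 - \<rho> 1)"] less_one[of 1] by (simp add: W_def)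
  moreover have "0 \<le> W p0"
    using exp_neg_div_less_one_minus[of "1 - \<rho> p0" c p0] less_one[of p0] linear(2)[of p0] p0
    by (simp add: W_def)
  ultimately obtain p where "p0 \<le> p" "p \<le> 1" "W p = 0" using IVT2'[of W 1 0 p0] p0 by blast
  then have "residual_fixpoint \<rho> p"
    using p0 by (auto simp: W_def residual_fixpoint_def)
  then show "\<exists>p. residual_fixpoint \<rho> p" ..
next
  fix p1 p2 assume "residual_fixpoint \<rho> p1" "residual_fixpoint \<rho> p2"
  moreover have "\<rho> p1 < 1" "\<rho> p2 < 1"
    using calculation less_one by (auto simp: residual_fixpoint_def)
  ultimately have "p2 \<le> p1" "p1 \<le> p2"
    using residual_fixpoint_le[where \<sigma> = \<rho>] antitone by blast+
  then show "p1 = p2" by simp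
qed

section \<open>The high tier\<close>

lemma strat_decomp:
  assumes "0 \<le> X"
  shows "X = real (strat_k X) + strat_x X" "0 \<le> strat_x X" "strat_x X < 1"
proof -
  have "real (strat_k X) = of_int \<lfloor>X\<rfloor>" using assms by (simp add: strat_k_def)
  then show "X = real (strat_k X) + strat_x X" "0 \<le> strat_x X" "strat_x X < 1"
    by (simp_all add: strat_x_def) linarith+
qed

lemma strat_zero: "strat_k 0 = 0" "strat_x 0 = 0"
  by (simp_all add: strat_k_def strat_x_def)

lemma strat_k_mono: "X \<le> Y \<Longrightarrow> strat_k X \<le> strat_k Y"
  unfolding strat_k_def by (simp add: floor_mono nat_mono)

lemma strat_k_less:
  assumes "0 \<le> X" "X < real K"
  shows "strat_k X < K"
  using strat_decomp[OF assms(1)] assms(2) by linarith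

lemma times_sum_power_one_minus:
  fixes p :: real
  shows "p * (\<Sum>i<n. (1 - p) ^ i) = 1 - (1 - p) ^ n"
  using one_diff_power_eq[of "1 - p" n] by simp

lemma matched_fixpoint_iff:
  fixes r p L :: real
  assumes "0 < r" "0 < p"
  shows "L = r * (1 - exp (- (L / p) / r)) \<longleftrightarrow> 1 - L / r = exp (- (1 - (1 - L / r)) / p)"
  using assms by (auto simp: field_simps)

definition high_residual :: "real \<Rightarrow> real \<Rightarrow> real" where
  "high_residual X p = (1 - p) ^ strat_k X * (1 - strat_x X * p)"

lemma high_matched_eq: "high_matched X p = 1 - high_residual X p"
  by (simp add: high_matched_def high_residual_def algebra_simps)

lemma times_high_apps: "p * high_apps X p = high_matched X p"
  unfolding high_apps_def high_matched_def
  by (simp add: algebra_simps times_sum_power_one_minus flip: mult.assoc)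

lemma high_fp_iff: "p \<in> {0<..1} \<and> high_fp X p \<longleftrightarrow> residual_fixpoint (high_residual X) p"
proof (cases "0 < p")
  case True
  have "high_apps X p = high_matched X p / p"
    using times_high_apps[of p X] True by (simp add: field_simps)
  then show ?thesis
    using matched_fixpoint_iff[of 1 p "high_matched X p"] True
    by (simp add: high_fp_def residual_fixpoint_def high_matched_eq)
qed (simp add: residual_fixpoint_def)

lemma high_residual_antimono:
  assumes "0 \<le> X" "0 \<le> p" "p \<le> q" "q \<le> 1"
  shows "high_residual X q \<le> high_residual X p"
proof -
  have x: "0 \<le> strat_x X" "strat_x X < 1" using strat_decomp[OF assms(1)] by auto
  have "(1 - q) ^ strat_k X \<le> (1 - p) ^ strat_k X" using assms by (intro power_mono) auto
  moreover have "1 - strat_x X * q \<le> 1 - strat_x X * p" using x assms by (simp add: mult_left_mono)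
  moreover have "0 \<le> 1 - strat_x X * q" using x assms by (simp add: mult_le_one)
  ultimately show ?thesis unfolding high_residual_def using assms by (intro mult_mono) auto
qed

lemma high_residual_less_one:
  assumes "0 < X" "0 < p" "p \<le> 1"
  shows "high_residual X p < 1"
proof (cases "strat_k X = 0")
  case True
  then have "strat_x X = X" using strat_decomp[of X] assms by simp
  then show ?thesis using True assms by (simp add: high_residual_def)
next
  case False
  have "0 \<le> 1 - strat_x X * p" "1 - strat_x X * p \<le> 1"
    using strat_decomp[of X] assms by (auto simp: mult_le_one)
  moreover have "(1 - p) ^ strat_k X \<le> 1 - p"
    using False assms power_decreasing[of 1 "strat_k X" "1 - p"] by simp
  ultimately have "high_residual X p \<le> 1 - p"
    unfolding high_residual_def using assms
    by (metis diff_ge_0_iff_ge mult_right_le_one_le order.trans zero_le_power)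
  then show ?thesis using assms by linarith
qed

text \<open>Raising \<open>X\<close> moves mass from lists with \<open>k\<close> to lists with \<open>k + 1\<close> high hospitals, or
  across an integer from the factor \<open>1 - x p\<close> to a whole extra factor \<open>1 - p\<close>.\<close>

lemma high_residual_strict_antimono_strategy:
  assumes "0 \<le> X" "X < Y" "0 < p" "p \<le> 1" "0 < high_residual X p"
  shows "high_residual Y p < high_residual X p"
proof -
  define k x l y where "k = strat_k X" "x = strat_x X" "l = strat_k Y" "y = strat_x Y"
  have X: "X = real k + x" "0 \<le> x" "x < 1" using strat_decomp[OF assms(1)] k_x_l_y_def by auto
  have Y: "Y = real l + y" "0 \<le> y" "y < 1" using strat_decomp[of Y] assms k_x_l_y_def by auto
  have "k \<le> l" using strat_k_mono[of X Y] assms k_x_l_y_def by simp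
  have res: "high_residual X p = (1 - p) ^ k * (1 - x * p)" "high_residual Y p = (1 - p) ^ l * (1 - y * p)"
    using k_x_l_y_def by (auto simp: high_residual_def)
  have pk: "0 < (1 - p) ^ k"
    using assms(4,5) res(1) by (metis diff_ge_0_iff_ge mult_eq_0_iff order_less_le zero_le_power)
  show ?thesis
  proof (cases "k = l")
    case True
    then have "x * p < y * p" using X Y assms by simp
    then show ?thesis using res True pk by simp
  next
    case False
    then have "Suc k \<le> l" using \<open>k \<le> l\<close> by simp
    have "high_residual Y p \<le> (1 - p) ^ l"
      using res Y assms by (simp add: mult_left_le mult_le_one)
    also have "\<dots> \<le> (1 - p) ^ Suc k" using \<open>Suc k \<le> l\<close> assms by (intro power_decreasing) auto
    also have "\<dots> < (1 - p) ^ k * (1 - x * p)" using pk X assms by simp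
    finally show ?thesis using res by simp
  qed
qed

lemma one_minus_high_residual_le:
  assumes "0 \<le> X" "0 \<le> p" "p \<le> 1"
  shows "1 - high_residual X p \<le> X * p"
proof -
  define k x where "k = strat_k X" "x = strat_x X"
  have X: "X = real k + x" "0 \<le> x" "x < 1" using strat_decomp[OF assms(1)] k_x_def by auto
  have "1 - k * p \<le> (1 - p) ^ k" using Bernoulli_inequality[of "- p" k] assms by simp
  moreover have "0 \<le> 1 - x * p" using X assms by (simp add: mult_le_one)
  ultimately have "(1 - k * p) * (1 - x * p) \<le> high_residual X p"
    unfolding high_residual_def k_x_def[symmetric] by (rule mult_right_mono)
  moreover have "1 - X * p \<le> (1 - k * p) * (1 - x * p)" using X assms by (simp add: algebra_simps)
  ultimately show ?thesis by linarith
qed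

lemma residual_fixpoint_p_high:
  assumes "0 < X"
  shows "residual_fixpoint (high_residual X) (p_high X)"
proof -
  have "\<exists>!p. residual_fixpoint (high_residual X) p"
  proof (rule residual_fixpoint_ex1[where c = X])
    show "continuous_on {0<..1} (high_residual X)"
      unfolding high_residual_def by (intro continuous_intros)
  qed (use assms high_residual_antimono high_residual_less_one one_minus_high_residual_le in auto)
  then show ?thesis unfolding p_high_def high_fp_iff by (rule theI')
qed

lemma high_residual_p_high_less_one:
  assumes "0 < X"
  shows "high_residual X (p_high X) < 1"
  using residual_fixpoint_p_high[OF assms] high_residual_less_one[OF assms]
  by (simp add: residual_fixpoint_def)

lemma p_high_strict_antimono:
  assumes "0 < X" "X < Y"
  shows "p_high Y < p_high X"
proof (rule residual_fixpoint_less[where \<rho> = "high_residual X" and \<sigma> = "high_residual Y"])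
  have "0 < Y" using assms by linarith
  then show "residual_fixpoint (high_residual Y) (p_high Y)" "high_residual Y (p_high Y) < 1"
    by (simp_all add: residual_fixpoint_p_high high_residual_p_high_less_one)
  show fp: "residual_fixpoint (high_residual X) (p_high X)" "high_residual X (p_high X) < 1"
    using assms by (simp_all add: residual_fixpoint_p_high high_residual_p_high_less_one)
  show "high_residual Y (p_high X) < high_residual X (p_high X)"
    using fp assms residual_fixpoint_imp_prob_of_residual(1)[OF fp]
    by (intro high_residual_strict_antimono_strategy) (auto simp: residual_fixpoint_def)
  show "high_residual Y q \<le> high_residual Y p" if "0 < p" "p \<le> q" "q \<le> 1" for p q
    using that \<open>0 < Y\<close> by (simp add: high_residual_antimono)
qed

lemma high_residual_p_high_strict_antimono:
  assumes "0 \<le> X" "X < Y"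
  shows "high_residual Y (p_high Y) < high_residual X (p_high X)"
proof (cases "X = 0")
  case True
  then show ?thesis
    using high_residual_p_high_less_one[of Y] assms by (simp add: high_residual_def strat_zero)
next
  case False
  then have "0 < X" "0 < Y" using assms by auto
  note fpX = residual_fixpoint_p_high[OF \<open>0 < X\<close>] high_residual_p_high_less_one[OF \<open>0 < X\<close>]
  note fpY = residual_fixpoint_p_high[OF \<open>0 < Y\<close>] high_residual_p_high_less_one[OF \<open>0 < Y\<close>]
  show ?thesis
  proof (rule ccontr)
    assume "\<not> ?thesis"
    then have "p_high X \<le> p_high Y"
      using prob_of_residual_strict_mono[of "high_residual X (p_high X)" "high_residual Y (p_high Y)"]
        residual_fixpoint_imp_prob_of_residual[OF fpX] residual_fixpoint_imp_prob_of_residual[OF fpY] fpY(2)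
      by (cases "high_residual X (p_high X) = high_residual Y (p_high Y)") auto
    then show False using p_high_strict_antimono[OF \<open>0 < X\<close> assms(2)] by simp
  qed
qed

section \<open>The low tier\<close>

text \<open>A mass \<open>a\<close> of doctors sends \<open>m\<close> applications and a mass \<open>b\<close> sends \<open>m + 1\<close>, each accepted
  independently with probability \<open>p\<close>; this is the mass that gets matched.\<close>

definition matched_mass :: "real \<Rightarrow> real \<Rightarrow> nat \<Rightarrow> real \<Rightarrow> real" where
  "matched_mass a b m p = a * (1 - (1 - p) ^ m) + b * (1 - (1 - p) ^ Suc m)"

lemma matched_mass_eq_Suc: "matched_mass a b m p = (a + b) * (1 - (1 - p) ^ Suc m) - a * (1 - p) ^ m * p"
  by (simp add: matched_mass_def algebra_simps)

lemma matched_mass_eq: "matched_mass a b m p = (a + b) * (1 - (1 - p) ^ m) + b * (1 - p) ^ m * p"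
  by (simp add: matched_mass_def algebra_simps)

lemma one_minus_power_Suc_pos:
  fixes p :: real
  assumes "0 < p" "p \<le> 1"
  shows "0 < 1 - (1 - p) ^ Suc n"
proof -
  have "(1 - p) ^ Suc n \<le> 1 - p"
    unfolding power_Suc using assms by (intro mult_left_le power_le_one) auto
  then show ?thesis using assms by linarith
qed

lemma matched_mass_pos:
  assumes "0 \<le> a" "0 < b" "0 < p" "p \<le> 1"
  shows "0 < matched_mass a b m p"
  using one_minus_power_Suc_pos[OF assms(3,4), of m] assms
  by (simp add: matched_mass_def add_nonneg_pos power_le_one)

lemma matched_mass_mono:
  assumes "0 \<le> a" "0 \<le> b" "0 \<le> p" "p \<le> q" "q \<le> 1"
  shows "matched_mass a b m p \<le> matched_mass a b m q"
proof -
  have "(1 - q) ^ n \<le> (1 - p) ^ n" for n using assms by (intro power_mono) auto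
  from this[of m] this[of "Suc m"] show ?thesis
    unfolding matched_mass_def using assms by (intro add_mono mult_left_mono) (simp_all del: power_Suc)
qed

lemma matched_mass_le:
  assumes "0 \<le> a" "0 \<le> b" "a + b \<le> 1" "0 \<le> p" "p \<le> 1"
  shows "matched_mass a b m p \<le> real (Suc m) * p"
proof -
  have bound: "1 - (1 - p) ^ n \<le> real n * p" for n
    using Bernoulli_inequality[of "- p" n] assms by simp
  have "real m * p \<le> real (Suc m) * p" using assms by (intro mult_right_mono) auto
  with bound[of m] bound[of "Suc m"]
  have "matched_mass a b m p \<le> a * (real (Suc m) * p) + b * (real (Suc m) * p)"
    unfolding matched_mass_def using assms by (intro add_mono mult_left_mono) (simp_all del: power_Suc)
  also have "\<dots> \<le> real (Suc m) * p" using assms by (simp add: mult_left_le_one_le flip: distrib_right)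
  finally show ?thesis .
qed

lemma matched_mass_strict_less_same_length:
  assumes "a' \<le> a" "a + b < a' + b'" "0 < p" "p \<le> 1"
  shows "matched_mass a b m p < matched_mass a' b' m p"
proof -
  have "(a + b) * (1 - (1 - p) ^ Suc m) < (a' + b') * (1 - (1 - p) ^ Suc m)"
    using one_minus_power_Suc_pos[OF assms(3,4)] assms(2) by simp
  moreover have "a' * (1 - p) ^ m * p \<le> a * (1 - p) ^ m * p" using assms by (intro mult_right_mono) auto
  ultimately show ?thesis unfolding matched_mass_eq_Suc by linarith
qed

lemma matched_mass_strict_less_longer:
  assumes "0 \<le> a" "0 \<le> b'" "0 \<le> a + b" "a + b < a' + b'" "0 < p" "p \<le> 1" "Suc m \<le> m'"
  shows "matched_mass a b m p < matched_mass a' b' m' p"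
proof -
  obtain n where n: "m' = Suc n" using assms(7) by (cases m') auto
  have "matched_mass a b m p \<le> (a + b) * (1 - (1 - p) ^ Suc m)"
    unfolding matched_mass_eq_Suc using assms by simp
  also have "\<dots> \<le> (a + b) * (1 - (1 - p) ^ m')"
    using power_decreasing[OF assms(7), of "1 - p"] assms by (intro mult_left_mono) auto
  also have "\<dots> < (a' + b') * (1 - (1 - p) ^ m')"
    using one_minus_power_Suc_pos[OF assms(5,6), of n] assms(4) n by simp
  also have "\<dots> \<le> matched_mass a' b' m' p"
    unfolding matched_mass_eq using assms by simp
  finally show ?thesis .
qed

text \<open>High doctors still unmatched after the high tier, split by the length of their remaining
  low list: \<open>K - k - 1\<close> for those listing \<open>k + 1\<close> high hospitals, \<open>K - k\<close> for the others.\<close>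

definition unmatched_short :: "real \<Rightarrow> real" where
  "unmatched_short X = strat_x X * (1 - p_high X) ^ (strat_k X + 1)"

definition unmatched_long :: "real \<Rightarrow> real" where
  "unmatched_long X = (1 - strat_x X) * (1 - p_high X) ^ strat_k X"

definition low_list_length :: "nat \<Rightarrow> real \<Rightarrow> nat" where
  "low_list_length K X = K - strat_k X - 1"

definition low_residual :: "real \<Rightarrow> nat \<Rightarrow> real \<Rightarrow> real \<Rightarrow> real" where
  "low_residual r K X p =
     1 - matched_mass (unmatched_short X) (unmatched_long X) (low_list_length K X) p / r"

lemma unmatched_sum: "unmatched_short X + unmatched_long X = high_residual X (p_high X)"
  by (simp add: unmatched_short_def unmatched_long_def high_residual_def algebra_simps)

lemma high_residual_p_high_le_one:
  assumes "0 \<le> X"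
  shows "high_residual X (p_high X) \<le> 1"
proof (cases "X = 0")
  case False
  then show ?thesis
    using high_residual_p_high_less_one[of X] assms by simp
qed (simp add: high_residual_def strat_zero)

lemma unmatched_short_nonneg_long_pos:
  assumes "0 \<le> X"
  shows "0 \<le> unmatched_short X" "0 < unmatched_long X"
proof -
  have "0 \<le> unmatched_short X \<and> 0 < unmatched_long X"
  proof (cases "X = 0")
    case True
    then show ?thesis by (simp add: unmatched_short_def unmatched_long_def strat_zero)
  next
    case False
    then have "0 < X" using assms by simp
    note fp = residual_fixpoint_p_high[OF this]
    have "0 < high_residual X (p_high X)"
      using residual_fixpoint_imp_prob_of_residual(1)[OF fp high_residual_p_high_less_one[OF \<open>0 < X\<close>]] .
    then have "(1 - p_high X) ^ strat_k X \<noteq> 0"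
      unfolding high_residual_def by (metis mult_zero_left less_irrefl)
    moreover have "0 \<le> 1 - p_high X" using fp by (simp add: residual_fixpoint_def)
    ultimately show ?thesis using strat_decomp[OF assms]
      by (simp add: unmatched_short_def unmatched_long_def order_le_neq_trans)
  qed
  then show "0 \<le> unmatched_short X" "0 < unmatched_long X" by auto
qed

lemma low_matched_eq:
  assumes "strat_k X < K"
  shows "low_matched K X (p_high X) p =
    matched_mass (unmatched_short X) (unmatched_long X) (low_list_length K X) p"
proof -
  have "K - strat_k X = Suc (low_list_length K X)" using assms by (simp add: low_list_length_def)
  then show ?thesis
    unfolding low_matched_def matched_mass_def unmatched_short_def unmatched_long_def low_list_length_def
    by (simp add: algebra_simps)
qed

lemma times_low_apps: "p * low_apps K X P p = low_matched K X P p"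
proof -
  have "p * low_apps K X P p =
      strat_x X * (1 - P) ^ (strat_k X + 1) * (p * (\<Sum>i<K - strat_k X - 1. (1 - p) ^ i))
    + (1 - strat_x X) * (1 - P) ^ strat_k X * (p * (\<Sum>i<K - strat_k X. (1 - p) ^ i))"
    unfolding low_apps_def by (simp only: distrib_left mult.commute mult.left_commute)
  then show ?thesis unfolding low_matched_def times_sum_power_one_minus .
qed

lemma low_fp_iff:
  assumes "0 < r" "strat_k X < K"
  shows "p \<in> {0<..1} \<and> low_fp r K X (p_high X) p \<longleftrightarrow> residual_fixpoint (low_residual r K X) p"
proof (cases "0 < p")
  case True
  define L where "L = low_matched K X (p_high X) p"
  have apps: "low_apps K X (p_high X) p = L / p"
    using times_low_apps[of p K X "p_high X"] True by (simp add: L_def field_simps)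
  have res: "low_residual r K X p = 1 - L / r"
    unfolding low_residual_def L_def low_matched_eq[OF assms(2)] ..
  have "low_fp r K X (p_high X) p \<longleftrightarrow> L = r * (1 - exp (- (L / p) / r))"
    unfolding low_fp_def apps L_def ..
  then show ?thesis
    unfolding residual_fixpoint_def res matched_fixpoint_iff[OF assms(1) True] by simp
qed (simp add: residual_fixpoint_def)

lemma low_residual_less_one:
  assumes "0 < r" "0 \<le> X" "0 < p" "p \<le> 1"
  shows "low_residual r K X p < 1"
  using matched_mass_pos[OF unmatched_short_nonneg_long_pos[OF assms(2)] assms(3,4)] assms(1)
  by (simp add: low_residual_def)

lemma low_residual_antimono:
  assumes "0 < r" "0 \<le> X" "0 \<le> p" "p \<le> q" "q \<le> 1"
  shows "low_residual r K X q \<le> low_residual r K X p"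
  using matched_mass_mono[of "unmatched_short X" "unmatched_long X" p q] assms
    unmatched_short_nonneg_long_pos[OF assms(2)]
  by (simp add: low_residual_def divide_right_mono)

lemma residual_fixpoint_p_low:
  assumes "0 < r" "0 \<le> X" "X < real K"
  shows "residual_fixpoint (low_residual r K X) (p_low r K X)"
proof -
  let ?a = "unmatched_short X" and ?b = "unmatched_long X" and ?m = "low_list_length K X"
  have ab: "0 \<le> ?a" "0 \<le> ?b" "?a + ?b \<le> 1"
    using unmatched_short_nonneg_long_pos[OF assms(2)] high_residual_p_high_le_one[OF assms(2)]
    by (simp_all add: unmatched_sum)
  have "\<exists>!p. residual_fixpoint (low_residual r K X) p"
  proof (rule residual_fixpoint_ex1[where c = "real (Suc ?m) / r"])
    show "continuous_on {0<..1} (low_residual r K X)"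
      unfolding low_residual_def matched_mass_def using assms(1) by (intro continuous_intros) auto
    show "1 - low_residual r K X p \<le> real (Suc ?m) / r * p" if "0 < p" "p \<le> 1" for p
      using matched_mass_le[OF ab, of p ?m] that assms(1)
      by (simp add: low_residual_def divide_right_mono)
    show "low_residual r K X q \<le> low_residual r K X p" if "0 < p" "p \<le> q" "q \<le> 1" for p q
      using low_residual_antimono[OF assms(1,2)] that by simp
    show "low_residual r K X p < 1" if "0 < p" "p \<le> 1" for p
      using low_residual_less_one[OF assms(1,2)] that by simp
    show "0 \<le> real (Suc ?m) / r" using assms(1) by simp
  qed
  then show ?thesis
    unfolding p_low_def low_fp_iff[OF assms(1) strat_k_less[OF assms(2,3)]] by (rule theI')
qed

lemma unmatched_short_mono:
  assumes "0 \<le> X" "X < Y" "strat_k X = strat_k Y"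
  shows "unmatched_short X \<le> unmatched_short Y"
proof (cases "X = 0")
  case True
  then show ?thesis
    using unmatched_short_nonneg_long_pos[of Y] assms by (simp add: unmatched_short_def strat_zero)
next
  case False
  then have "0 < X" using assms by simp
  have "strat_x X \<le> strat_x Y" "0 \<le> strat_x X"
    using strat_decomp[OF assms(1)] strat_decomp[of Y] assms by auto
  moreover have "0 \<le> 1 - p_high X"
    using residual_fixpoint_p_high[OF \<open>0 < X\<close>] by (simp add: residual_fixpoint_def)
  moreover have "(1 - p_high X) ^ (strat_k X + 1) \<le> (1 - p_high Y) ^ (strat_k Y + 1)"
    unfolding assms(3) using p_high_strict_antimono[OF \<open>0 < X\<close> assms(2)] calculation(3)
    by (intro power_mono) auto
  ultimately show ?thesis unfolding unmatched_short_def by (intro mult_mono) auto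
qed

text \<open>Fewer high doctors reach the low tier, and those who do have no longer low lists.\<close>

lemma low_residual_strict_mono_strategy:
  assumes "0 < r" "0 \<le> X" "X < Y" "Y < real K" "0 < p" "p \<le> 1"
  shows "low_residual r K X p < low_residual r K Y p"
proof -
  have "0 \<le> Y" using assms by linarith
  note X = unmatched_short_nonneg_long_pos[OF assms(2)]
  note Y = unmatched_short_nonneg_long_pos[OF \<open>0 \<le> Y\<close>]
  have sum: "unmatched_short Y + unmatched_long Y < unmatched_short X + unmatched_long X"
    using high_residual_p_high_strict_antimono[OF assms(2,3)] by (simp add: unmatched_sum)
  have "strat_k X \<le> strat_k Y" using strat_k_mono assms by simp
  have "strat_k Y < K" using strat_k_less[OF \<open>0 \<le> Y\<close> assms(4)] .
  have "matched_mass (unmatched_short Y) (unmatched_long Y) (low_list_length K Y) p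
      < matched_mass (unmatched_short X) (unmatched_long X) (low_list_length K X) p"
  proof (cases "strat_k X = strat_k Y")
    case True
    then show ?thesis
      using matched_mass_strict_less_same_length[OF unmatched_short_mono[OF assms(2,3)] sum assms(5,6)]
      by (simp add: low_list_length_def)
  next
    case False
    then have "Suc (low_list_length K Y) \<le> low_list_length K X"
      using \<open>strat_k X \<le> strat_k Y\<close> \<open>strat_k Y < K\<close> by (simp add: low_list_length_def)
    then show ?thesis using matched_mass_strict_less_longer[OF _ _ _ sum assms(5,6)] X Y by simp
  qed
  then show ?thesis using assms(1) by (simp add: low_residual_def divide_strict_right_mono)
qed

lemma p_low_strict_mono:
  assumes "0 < r" "0 \<le> X" "X < Y" "Y < real K"
  shows "p_low r K X < p_low r K Y"
proof (rule residual_fixpoint_less[where \<rho> = "low_residual r K Y" and \<sigma> = "low_residual r K X"])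
  have "0 \<le> Y" "X < real K" using assms by linarith+
  show fpY: "residual_fixpoint (low_residual r K Y) (p_low r K Y)"
    using residual_fixpoint_p_low[OF assms(1) \<open>0 \<le> Y\<close> assms(4)] .
  show "residual_fixpoint (low_residual r K X) (p_low r K X)"
    using residual_fixpoint_p_low[OF assms(1,2) \<open>X < real K\<close>] .
  then show "low_residual r K X (p_low r K X) < 1"
    using low_residual_less_one[OF assms(1,2)] by (simp add: residual_fixpoint_def)
  show "low_residual r K Y (p_low r K Y) < 1"
    using fpY low_residual_less_one[OF assms(1) \<open>0 \<le> Y\<close>] by (simp add: residual_fixpoint_def)
  show "low_residual r K X (p_low r K Y) < low_residual r K Y (p_low r K Y)"
    using fpY low_residual_strict_mono_strategy[OF assms] by (simp add: residual_fixpoint_def)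
  show "low_residual r K X q \<le> low_residual r K X p" if "0 < p" "p \<le> q" "q \<le> 1" for p q
    using low_residual_antimono[OF assms(1,2)] that by simp
qed

theorem claim1:
  fixes r :: real and K :: nat
  assumes "r > 0"
  shows "(\<forall>X1 X2. 0 < X1 \<and> X1 < X2 \<and> X2 \<le> real K \<longrightarrow> p_high X2 < p_high X1)
       \<and> (\<forall>X1 X2. 0 \<le> X1 \<and> X1 < X2 \<and> X2 < real K \<longrightarrow> p_low r K X1 < p_low r K X2)"
  using p_high_strict_antimono p_low_strict_mono[OF assms] by blast

end
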